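(* Fix a positive integer $m$. Then, as a function of $n$ (with $n\to\infty$), the domination number satisfies $\gamma(\mathcal{SR}(m,n))=\Theta(n^{m-2})$.
   Context: For positive integers $m,n$, the simplicial rook graph $\mathcal{SR}(m,n)$ is the graph whose vertices are the vectors $(a_1,\dots,a_m)\in\mathbb{N}^m$ (nonnegative integer coordinates) with $a_1+\cdots+a_m=n$, two vertices being adjacent if and only if their vectors differ in exactly two coordinates. $\gamma(G)$ denotes the domination number of a graph $G$: the minimum size of a set $D$ of vertices such that every vertex is in $D$ or adjacent to a vertex of $D$. *)

theory Defs
  imports Complex_Main "HOL-Library.Landau_Symbols"
begin

text \<open>Vertices of the simplicial rook graph SR(m,n): vectors (a_0,...,a_(m-1)) of
  naturals with sum n, encoded as functions nat => nat vanishing outside {..<m}.\<close>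
definition SR_verts :: "nat \<Rightarrow> nat \<Rightarrow> (nat \<Rightarrow> nat) set" where
  "SR_verts m n = {a. (\<forall>i\<ge>m. a i = 0) \<and> (\<Sum>i<m. a i) = n}"

definition SR_adj :: "nat \<Rightarrow> (nat \<Rightarrow> nat) \<Rightarrow> (nat \<Rightarrow> nat) \<Rightarrow> bool" where
  "SR_adj m a b \<longleftrightarrow> card {i\<in>{..<m}. a i \<noteq> b i} = 2"

definition dominating_set :: "'a set \<Rightarrow> ('a \<Rightarrow> 'a \<Rightarrow> bool) \<Rightarrow> 'a set \<Rightarrow> bool" where
  "dominating_set V E D \<longleftrightarrow> D \<subseteq> V \<and> (\<forall>v\<in>V. v \<in> D \<or> (\<exists>d\<in>D. E d v))"

definition domination_number :: "'a set \<Rightarrow> ('a \<Rightarrow> 'a \<Rightarrow> bool) \<Rightarrow> nat" where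
  "domination_number V E = (LEAST k. \<exists>D. finite D \<and> dominating_set V E D \<and> card D = k)"

definition SR_gamma :: "nat \<Rightarrow> nat \<Rightarrow> nat" where
  "SR_gamma m n = domination_number (SR_verts m n) (SR_adj m)"

end

theory Submission
  imports Defs "HOL-Library.FuncSet"
begin

(* Moving the whole entry a_(m-2) of a vertex onto a_(m-1) changes exactly two
   coordinates, so the at most (n+1)^(m-2) vertices with a_(m-2) = 0 dominate SR(m,n).
   Conversely, a neighbour of a vertex is determined by the two coordinates that change
   and one new value, so a vertex dominates at most m^2 (n+1) + 1 vertices, while
   choosing a_0, ..., a_(m-2) <= n div (m-1) freely already gives (n div (m-1) + 1)^(m-1)
   vertices; hence a dominating set has at least order n^(m-2) elements. *)

lemma domination_number_le_card:
  assumes "finite D" "dominating_set V E D"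
  shows "domination_number V E \<le> card D"
  unfolding domination_number_def by (rule Least_le) (use assms in auto)

lemma domination_number_attained:
  assumes "finite V"
  obtains D where "finite D" "dominating_set V E D" "card D = domination_number V E"
proof -
  have "\<exists>k D. finite D \<and> dominating_set V E D \<and> card D = k"
    using assms by (auto simp: dominating_set_def)
  from LeastI_ex[OF this] show ?thesis
    using that unfolding domination_number_def by blast
qed

lemma card_le_domination_number_mult:
  assumes "finite V" and nbhd: "\<And>d. d \<in> V \<Longrightarrow> card {v\<in>V. E d v} \<le> K"
  shows "card V \<le> domination_number V E * (K + 1)"
proof -
  obtain D where D: "finite D" "dominating_set V E D" "card D = domination_number V E"
    using domination_number_attained[OF assms(1)] .
  have "V \<subseteq> (\<Union>d\<in>D. insert d {v\<in>V. E d v})"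
    using D(2) by (auto simp: dominating_set_def)
  then have "card V \<le> card (\<Union>d\<in>D. insert d {v\<in>V. E d v})"
    by (rule card_mono[rotated]) (use assms D in auto)
  also have "\<dots> \<le> (\<Sum>d\<in>D. card (insert d {v\<in>V. E d v}))"
    by (rule card_UN_le) (use D in auto)
  also have "\<dots> \<le> (\<Sum>d\<in>D. K + 1)"
  proof (rule sum_mono)
    fix d assume "d \<in> D"
    then have "card {v\<in>V. E d v} \<le> K"
      using D(2) nbhd by (auto simp: dominating_set_def)
    then show "card (insert d {v\<in>V. E d v}) \<le> K + 1"
      using card_insert_le_m1[of "K + 1"] assms(1) by simp
  qed
  finally show ?thesis using D(3) by simp
qed

lemma domination_number_pos:
  assumes "finite V" "V \<noteq> {}"
  shows "domination_number V E > 0"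
proof -
  obtain D where "dominating_set V E D" "card D = domination_number V E" "finite D"
    using domination_number_attained[OF assms(1)] .
  with assms(2) show ?thesis by (auto simp: dominating_set_def)
qed

lemma bigtheta_power_if_nat_bounds:
  fixes f :: "nat \<Rightarrow> nat"
  assumes upper: "\<And>n. f n \<le> (n + 1) ^ k" and lower: "\<And>n. n \<ge> 1 \<Longrightarrow> n ^ k \<le> C * f n"
  shows "(\<lambda>n. real (f n)) \<in> \<Theta>(\<lambda>n. real n ^ k)"
proof (rule bigthetaI')
  have "C > 0" using lower[of 1] by (cases "C = 0") simp_all
  then show "1 / real C > 0" by simp
  show "(2::real) ^ k > 0" by simp
  show "\<forall>\<^sub>F n in at_top. 1 / real C * norm (real n ^ k) \<le> norm (real (f n))
      \<and> norm (real (f n)) \<le> 2 ^ k * norm (real n ^ k)"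
    using eventually_ge_at_top[of 1]
  proof eventually_elim
    case (elim n)
    have "real (n ^ k) \<le> real (C * f n)" using lower[OF elim] by (simp only: of_nat_le_iff)
    then have "1 / real C * real n ^ k \<le> real (f n)"
      using \<open>C > 0\<close> by (simp add: divide_le_eq mult.commute)
    moreover have "real (f n) \<le> 2 ^ k * real n ^ k"
    proof -
      have "real (f n) \<le> real ((n + 1) ^ k)" using upper by (simp only: of_nat_le_iff)
      also have "\<dots> = (real n + 1) ^ k" by (simp add: add.commute)
      also have "\<dots> \<le> (2 * real n) ^ k" using elim by (intro power_mono) simp_all
      also have "\<dots> = 2 ^ k * real n ^ k" by (rule power_mult_distrib)
      finally show ?thesis .
    qed
    ultimately show ?case by simp
  qed
qed

lemma SR_verts_coord_le: "a i \<le> n" if "a \<in> SR_verts m n"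
proof (cases "i < m")
  case True
  then have "a i \<le> (\<Sum>j<m. a j)" by (intro member_le_sum) auto
  then show ?thesis using that by (simp add: SR_verts_def)
qed (use that in \<open>simp add: SR_verts_def\<close>)

lemma finite_SR_verts: "finite (SR_verts m n)"
proof (rule finite_subset)
  show "SR_verts m n \<subseteq> {f. \<forall>x. (x \<in> {..<m} \<longrightarrow> f x \<in> {..n}) \<and> (x \<notin> {..<m} \<longrightarrow> f x = 0)}"
    using SR_verts_coord_le by (auto simp: SR_verts_def)
qed (rule finite_set_of_finite_funs; simp)

lemma SR_verts_one: "SR_verts 1 n = {\<lambda>i. if i = 0 then n else 0}"
  by (auto simp: SR_verts_def fun_eq_iff)

lemma SR_gamma_one: "SR_gamma 1 n = 1"
proof -
  let ?V = "{\<lambda>i::nat. if i = 0 then n else 0}"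
  have "domination_number ?V (SR_adj 1) \<le> card ?V"
    by (rule domination_number_le_card) (auto simp: dominating_set_def)
  moreover have "domination_number ?V (SR_adj 1) > 0"
    by (rule domination_number_pos) simp_all
  ultimately show ?thesis unfolding SR_gamma_def SR_verts_one by simp
qed

lemma dominating_set_SR_zero_coord:
  fixes k n :: nat
  defines "V \<equiv> SR_verts (Suc (Suc k)) n"
  shows "dominating_set V (SR_adj (Suc (Suc k))) {a \<in> V. a k = 0}"
  unfolding dominating_set_def
proof (intro conjI ballI)
  fix a assume a: "a \<in> V"
  define b where "b = a(k := 0, Suc k := a k + a (Suc k))"
  have "(\<Sum>i<k. b i) = (\<Sum>i<k. a i)" unfolding b_def by (rule sum.cong) auto
  then have "b \<in> V" using a by (simp add: V_def SR_verts_def b_def)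
  moreover have "SR_adj (Suc (Suc k)) b a" if "a k \<noteq> 0"
  proof -
    have "{i\<in>{..<Suc (Suc k)}. b i \<noteq> a i} = {k, Suc k}"
      using that by (auto simp: b_def)
    then show ?thesis by (simp add: SR_adj_def)
  qed
  ultimately show "a \<in> {a \<in> V. a k = 0} \<or> (\<exists>d\<in>{a \<in> V. a k = 0}. SR_adj (Suc (Suc k)) d a)"
    using a by (cases "a k = 0") (auto simp: b_def)
qed auto

text \<open>Such a vertex is determined by its first \<open>k\<close> entries, the last one being fixed
  by the coordinate sum.\<close>
lemma card_SR_zero_coord_le: "card {a \<in> SR_verts (Suc (Suc k)) n. a k = 0} \<le> (n + 1) ^ k"
proof -
  let ?D = "{a \<in> SR_verts (Suc (Suc k)) n. a k = 0}"
  have "inj_on (\<lambda>a. restrict a {..<k}) ?D"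
  proof
    fix a b assume a: "a \<in> ?D" and b: "b \<in> ?D"
      and eq: "restrict a {..<k} = restrict b {..<k}"
    have init: "a i = b i" if "i < k" for i
      using fun_cong[OF eq, of i] that by simp
    have "(\<Sum>i<k. a i) = (\<Sum>i<k. b i)" by (rule sum.cong) (simp_all add: init)
    moreover have "(\<Sum>i<k. a i) + a (Suc k) = n" "(\<Sum>i<k. b i) + b (Suc k) = n"
      using a b by (auto simp: SR_verts_def)
    ultimately have last: "a (Suc k) = b (Suc k)" by simp
    show "a = b"
    proof
      fix i
      consider "i < k" | "i = k" | "i = Suc k" | "i \<ge> Suc (Suc k)" by linarith
      then show "a i = b i"
        by cases (use init last a b in \<open>auto simp: SR_verts_def\<close>)
    qed
  qed
  moreover have "(\<lambda>a. restrict a {..<k}) ` ?D \<subseteq> PiE {..<k} (\<lambda>_. {..n})"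
    by (intro image_subsetI) (auto simp: restrict_PiE_iff intro: SR_verts_coord_le)
  ultimately have "card ?D \<le> card (PiE {..<k} (\<lambda>_. {..n}))"
    by (intro card_inj_on_le) (simp_all add: finite_PiE)
  then show ?thesis by (simp add: card_PiE)
qed

lemma SR_gamma_le: "SR_gamma m n \<le> (n + 1) ^ (m - 2)" if "m \<ge> 2"
proof -
  obtain k where m: "m = Suc (Suc k)" using \<open>m \<ge> 2\<close> by (metis add_2_eq_Suc le_Suc_ex)
  have "SR_gamma m n \<le> card {a \<in> SR_verts m n. a k = 0}"
    unfolding SR_gamma_def m using finite_SR_verts
    by (intro domination_number_le_card dominating_set_SR_zero_coord) simp
  with card_SR_zero_coord_le[of k n] show ?thesis by (simp add: m)
qed

lemma SR_adj_imp_update: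
  assumes a: "a \<in> SR_verts m n" and b: "b \<in> SR_verts m n" and "SR_adj m a b"
  obtains i j where "i < m" "j < m" "b = a(i := b i, j := a i + a j - b i)"
proof -
  obtain i j where "i \<noteq> j" and diff: "{l\<in>{..<m}. a l \<noteq> b l} = {i, j}"
    using \<open>SR_adj m a b\<close> unfolding SR_adj_def card_2_iff by blast
  have "i \<in> {l\<in>{..<m}. a l \<noteq> b l}" "j \<in> {l\<in>{..<m}. a l \<noteq> b l}"
    unfolding diff by simp_all
  then have ij: "i < m" "j < m" by simp_all
  have same: "a l = b l" if "l \<noteq> i" "l \<noteq> j" for l
  proof (cases "l < m")
    case True
    have "l \<notin> {l\<in>{..<m}. a l \<noteq> b l}" unfolding diff using that by simp
    with True show ?thesis by simp
  next
    case False
    with a b show ?thesis by (simp add: SR_verts_def)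
  qed
  have split: "sum f {..<m} = sum f ({..<m} - {i, j}) + f i + f j" for f :: "nat \<Rightarrow> nat"
    using sum.subset_diff[of "{i, j}" "{..<m}" f] ij \<open>i \<noteq> j\<close> by simp
  have "sum a ({..<m} - {i, j}) = sum b ({..<m} - {i, j})"
    by (rule sum.cong) (auto intro: same)
  moreover have "sum a {..<m} = sum b {..<m}" using a b by (simp add: SR_verts_def)
  ultimately have "b i + b j = a i + a j" by (simp add: split)
  have "b = a(i := b i, j := a i + a j - b i)"
  proof
    fix l
    consider "l = i" | "l = j" | "l \<noteq> i" "l \<noteq> j" by blast
    then show "b l = (a(i := b i, j := a i + a j - b i)) l"
    proof cases
      case 2
      with \<open>i \<noteq> j\<close> \<open>b i + b j = a i + a j\<close> show ?thesis by simp
    next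
      case 3
      then show ?thesis by (simp add: same)
    qed (use \<open>i \<noteq> j\<close> in simp)
  qed
  with ij that show ?thesis by blast
qed

lemma card_SR_neighbours_le:
  assumes "a \<in> SR_verts m n"
  shows "card {b \<in> SR_verts m n. SR_adj m a b} \<le> m * m * (n + 1)"
proof -
  let ?f = "\<lambda>(i, j, x). a(i := x, j := a i + a j - x)"
  have "{b \<in> SR_verts m n. SR_adj m a b} \<subseteq> ?f ` ({..<m} \<times> {..<m} \<times> {..n})"
  proof
    fix b assume "b \<in> {b \<in> SR_verts m n. SR_adj m a b}"
    then have b: "b \<in> SR_verts m n" "SR_adj m a b" by auto
    obtain i j where "i < m" "j < m" and upd: "b = ?f (i, j, b i)"
      using SR_adj_imp_update[OF assms b] by auto
    moreover have "b i \<le> n" using b(1) by (rule SR_verts_coord_le)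
    ultimately have "(i, j, b i) \<in> {..<m} \<times> {..<m} \<times> {..n}" by simp
    with upd show "b \<in> ?f ` ({..<m} \<times> {..<m} \<times> {..n})" by (rule image_eqI)
  qed
  then have "card {b \<in> SR_verts m n. SR_adj m a b} \<le> card (?f ` ({..<m} \<times> {..<m} \<times> {..n}))"
    by (rule card_mono[rotated]) simp
  also have "\<dots> \<le> card ({..<m} \<times> {..<m} \<times> {..n})" by (rule card_image_le) simp
  also have "\<dots> = m * m * (n + 1)" by (simp add: card_cartesian_product algebra_simps)
  finally show ?thesis .
qed

lemma card_SR_verts_ge: "(n div j + 1) ^ j \<le> card (SR_verts (Suc j) n)"
proof -
  let ?P = "PiE {..<j} (\<lambda>_. {..n div j})"
  let ?g = "\<lambda>f i. if i < j then f i else if i = j then n - sum f {..<j} else 0"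
  have "inj_on ?g ?P"
  proof
    fix f h assume f: "f \<in> ?P" and h: "h \<in> ?P" and eq: "?g f = ?g h"
    show "f = h"
    proof (rule PiE_ext[OF f h])
      fix i assume "i \<in> {..<j}"
      then show "f i = h i" using fun_cong[OF eq, of i] by simp
    qed
  qed
  moreover have "?g ` ?P \<subseteq> SR_verts (Suc j) n"
  proof
    fix a assume "a \<in> ?g ` ?P"
    then obtain f where f: "f \<in> ?P" and a: "a = ?g f" by blast
    have "sum f {..<j} \<le> (\<Sum>i<j. n div j)" by (rule sum_mono) (use f in auto)
    also have "\<dots> \<le> n" by simp
    finally have "sum f {..<j} \<le> n" .
    moreover have "(\<Sum>i<j. a i) = sum f {..<j}" unfolding a by (rule sum.cong) auto
    ultimately show "a \<in> SR_verts (Suc j) n" by (simp add: SR_verts_def a)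
  qed
  ultimately have "card ?P \<le> card (SR_verts (Suc j) n)"
    using finite_SR_verts by (rule card_inj_on_le)
  then show ?thesis by (simp add: card_PiE)
qed

lemma SR_gamma_ge:
  assumes "m \<ge> 2" "n \<ge> 1"
  shows "n ^ (m - 2) \<le> (m - 1) ^ (m - 1) * (2 * m * m + 1) * SR_gamma m n"
proof -
  obtain j where m: "m = Suc j" and "j \<ge> 1" using \<open>m \<ge> 2\<close> by (cases m) auto
  let ?\<gamma> = "SR_gamma m n"
  have "n < j * (n div j) + j"
    using mod_less_divisor[of j n] mult_div_mod_eq[of j n] \<open>j \<ge> 1\<close> by linarith
  have "n * n ^ (m - 2) = n ^ j" using \<open>j \<ge> 1\<close> by (cases j) (simp_all add: m)
  also have "\<dots> \<le> (j * (n div j + 1)) ^ j"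
    using \<open>n < j * (n div j) + j\<close> by (intro power_mono) simp_all
  also have "\<dots> = j ^ j * (n div j + 1) ^ j" by (rule power_mult_distrib)
  also have "\<dots> \<le> j ^ j * card (SR_verts m n)"
    unfolding m by (intro mult_left_mono card_SR_verts_ge) simp
  also have "\<dots> \<le> j ^ j * (?\<gamma> * (m * m * (n + 1) + 1))"
    unfolding SR_gamma_def
    by (intro mult_left_mono card_le_domination_number_mult finite_SR_verts card_SR_neighbours_le)
      simp_all
  also have "\<dots> \<le> j ^ j * (?\<gamma> * ((2 * m * m + 1) * n))"
  proof -
    have "m * m * 1 \<le> m * m * n" using \<open>n \<ge> 1\<close> by (rule mult_le_mono2)
    moreover have "m * m * (n + 1) = m * m * n + m * m * 1"
      and "(2 * m * m + 1) * n = m * m * n + m * m * n + n" by (simp_all add: algebra_simps)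
    ultimately have "m * m * (n + 1) + 1 \<le> (2 * m * m + 1) * n"
      using \<open>n \<ge> 1\<close> by linarith
    then show ?thesis by (intro mult_left_mono) simp_all
  qed
  also have "\<dots> = n * ((m - 1) ^ (m - 1) * (2 * m * m + 1) * ?\<gamma>)"
    unfolding m diff_Suc_1 by (simp only: mult_ac)
  finally show ?thesis using \<open>n \<ge> 1\<close> by simp
qed

theorem theorem2:
  fixes m :: nat
  assumes "m \<ge> 1"
  shows "(\<lambda>n. real (SR_gamma m n)) \<in> \<Theta>(\<lambda>n. real n ^ (m - 2))"
proof (cases "m = 1")
  case True
  then show ?thesis
    using SR_gamma_one by (intro bigtheta_power_if_nat_bounds[where C = 1]) simp_all
next
  case False
  with assms have "m \<ge> 2" by simp
  show ?thesis
    using SR_gamma_le[OF \<open>m \<ge> 2\<close>] SR_gamma_ge[OF \<open>m \<ge> 2\<close>] by (rule bigtheta_power_if_nat_bounds)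
qed

end
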